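(* Let $k\neq0$, $c_1$, $c_2$ be real constants and $f$ a smooth function of $\theta$ on an interval satisfying both $$\sin\theta\Big[\big(3f'+c_1\big)f''-2ff'\Big]+\cos\theta\Big[ff''+4(f')^2+2c_1f'\Big]=0$$ and $$(c_2-f')f''+k(c_1+2f')\cos\theta+k(f''-f)\sin\theta=0$$ (primes denote $d/d\theta$). In polar coordinates $x=r\cos\theta$, $y=r\sin\theta$ ($r>0$), let $V=\frac kr+\frac{f'(\theta)}{r^2}$. Then $$J=\frac13p_\theta^3+\Big(\cos\theta\,p_r-\sin\theta\frac{p_\theta}{r}\Big)p_\theta^2+\Big[(2f'+c_1)\cos\theta-f\sin\theta\Big]p_r-\Big[(3f'+c_1)\sin\theta+f\cos\theta\Big]\frac{p_\theta}{r}-\big(c_2-f'+k\sin\theta\big)p_\theta$$ is a first integral of $\ddot x=-V_{,x}$, $\ddot y=-V_{,y}$, where $p_r=\dot r$ and $p_\theta=r^2\dot\theta$.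
   Context: A first integral is a function of $(t,x,y,\dot x,\dot y)$ whose total time derivative vanishes along every solution of the given equations of motion. *)

theory Defs
  imports "HOL-Analysis.Analysis"
begin

definition polarJ ::
  "(real \<Rightarrow> real) \<Rightarrow> real \<Rightarrow> real \<Rightarrow> real \<Rightarrow> real \<Rightarrow> real \<Rightarrow> real \<Rightarrow> real \<Rightarrow> real" where
  "polarJ f k c1 c2 r \<theta> pr p\<theta> =
     p\<theta>^3 / 3
     + (cos \<theta> * pr - sin \<theta> * p\<theta> / r) * p\<theta>^2
     + ((2 * deriv f \<theta> + c1) * cos \<theta> - f \<theta> * sin \<theta>) * pr
     - ((3 * deriv f \<theta> + c1) * sin \<theta> + f \<theta> * cos \<theta>) * p\<theta> / r
     - (c2 - deriv f \<theta> + k * sin \<theta>) * p\<theta>"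

end

theory Submission
  imports Defs
begin

text \<open>
  For V = k/r + f'(theta)/r^2 Newton's equations read dp_r/dt = p_theta^2/r^3 + k/r^2 + 2f'/r^3
  and dp_theta/dt = -f''/r^2. Substituting them into dJ/dt, all momentum-dependent terms cancel
  and what remains is the left-hand side of the second ODE over r^2 plus that of the first over
  r^3. Since V is only known through its polar expression, its Cartesian partial derivatives
  are obtained by composing that expression with a continuous local branch of the polar angle.
\<close>

lemma radius_has_derivative:
  fixes x y :: "real \<Rightarrow> real"
  assumes "(x has_real_derivative vx) (at t)" and "(y has_real_derivative vy) (at t)"
    and "x t ^ 2 + y t ^ 2 > 0"
  shows "((\<lambda>s. sqrt (x s ^ 2 + y s ^ 2)) has_real_derivative
           (x t * vx + y t * vy) / sqrt (x t ^ 2 + y t ^ 2)) (at t)"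
  using assms by (auto intro!: derivative_eq_intros simp: divide_simps algebra_simps)

lemma radial_momentum_has_derivative:
  fixes x y vx vy :: "real \<Rightarrow> real" and t :: real
  defines "r \<equiv> sqrt (x t ^ 2 + y t ^ 2)"
  assumes x_deriv: "(x has_real_derivative vx t) (at t)"
    and y_deriv: "(y has_real_derivative vy t) (at t)"
    and vx_deriv: "(vx has_real_derivative ax) (at t)"
    and vy_deriv: "(vy has_real_derivative ay) (at t)"
    and r_pos: "r > 0"
  shows "((\<lambda>s. (x s * vx s + y s * vy s) / sqrt (x s ^ 2 + y s ^ 2)) has_real_derivative
           (x t * vy t - y t * vx t) ^ 2 / r ^ 3 + (x t * ax + y t * ay) / r) (at t)"
proof -
  have pos: "x t ^ 2 + y t ^ 2 > 0" using r_pos by (simp add: r_def)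
  then have r2: "r ^ 2 = x t ^ 2 + y t ^ 2" by (simp add: r_def)
  have num: "((\<lambda>s. x s * vx s + y s * vy s) has_real_derivative
      vx t * vx t + x t * ax + (vy t * vy t + y t * ay)) (at t)"
    by (auto intro!: derivative_eq_intros x_deriv y_deriv vx_deriv vy_deriv)
  have den: "((\<lambda>s. sqrt (x s ^ 2 + y s ^ 2)) has_real_derivative (x t * vx t + y t * vy t) / r) (at t)"
    unfolding r_def using radius_has_derivative[OF x_deriv y_deriv pos] .
  have "((vx t * vx t + x t * ax + (vy t * vy t + y t * ay)) * r
        - (x t * vx t + y t * vy t) * ((x t * vx t + y t * vy t) / r)) / (r * r)
      = (x t * vy t - y t * vx t) ^ 2 / r ^ 3 + (x t * ax + y t * ay) / r"
  proof -
    have lagrange: "(vx t * vx t + vy t * vy t) * r ^ 2 - (x t * vx t + y t * vy t) ^ 2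
        = (x t * vy t - y t * vx t) ^ 2"
      unfolding r2 by algebra
    define v2 p a q where "v2 = vx t * vx t + vy t * vy t" and "p = x t * vx t + y t * vy t"
      and "a = x t * ax + y t * ay" and "q = x t * vy t - y t * vx t"
    have "((v2 + a) * r - p * (p / r)) / (r * r) = (v2 * r ^ 2 - p ^ 2) / r ^ 3 + a / r"
      using r_pos by (simp add: field_simps power2_eq_square power3_eq_cube)
    then show ?thesis using lagrange by (simp add: v2_def p_def a_def q_def algebra_simps)
  qed
  moreover have "r \<noteq> 0" using r_pos by simp
  ultimately show ?thesis using DERIV_cong[OF DERIV_divide[OF num den], folded r_def] by blast
qed

lemma angular_momentum_has_derivative:
  fixes x y vx vy :: "real \<Rightarrow> real"
  assumes "(x has_real_derivative vx t) (at t)" and "(y has_real_derivative vy t) (at t)"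
    and "(vx has_real_derivative ax) (at t)" and "(vy has_real_derivative ay) (at t)"
  shows "((\<lambda>s. x s * vy s - y s * vx s) has_real_derivative x t * ay - y t * ax) (at t)"
  using assms by (auto intro!: derivative_eq_intros simp: algebra_simps)

lemma angular_momentum_polar:
  fixes x y \<theta> :: "real \<Rightarrow> real"
  assumes "open T" and "t \<in> T"
    and polar: "\<forall>s\<in>T. x s = sqrt (x s ^ 2 + y s ^ 2) * cos (\<theta> s)
                    \<and> y s = sqrt (x s ^ 2 + y s ^ 2) * sin (\<theta> s)"
    and x_deriv: "(x has_real_derivative vx) (at t)" and y_deriv: "(y has_real_derivative vy) (at t)"
    and pos: "x t ^ 2 + y t ^ 2 > 0" and \<theta>_diff: "\<theta> differentiable (at t)"
  shows "(x t ^ 2 + y t ^ 2) * deriv \<theta> t = x t * vy - y t * vx"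
proof -
  define r where "r s = sqrt (x s ^ 2 + y s ^ 2)" for s
  define pr where "pr = (x t * vx + y t * vy) / r t"
  have r_deriv: "(r has_real_derivative pr) (at t)"
    unfolding r_def[abs_def] pr_def using radius_has_derivative[OF x_deriv y_deriv pos] by simp
  have \<theta>_deriv: "(\<theta> has_real_derivative deriv \<theta> t) (at t)"
    using \<theta>_diff DERIV_deriv_iff_real_differentiable by blast
  have "((\<lambda>s. r s * cos (\<theta> s)) has_real_derivative pr * cos (\<theta> t) - r t * (sin (\<theta> t) * deriv \<theta> t)) (at t)"
    by (auto intro!: derivative_eq_intros r_deriv \<theta>_deriv)
  then have "(x has_real_derivative pr * cos (\<theta> t) - r t * (sin (\<theta> t) * deriv \<theta> t)) (at t)"
    by (rule has_field_derivative_transform_within_open[OF _ assms(1,2)]) (metis polar r_def)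
  then have vx: "vx = pr * cos (\<theta> t) - r t * (sin (\<theta> t) * deriv \<theta> t)"
    using x_deriv DERIV_unique by blast
  have "((\<lambda>s. r s * sin (\<theta> s)) has_real_derivative pr * sin (\<theta> t) + r t * (cos (\<theta> t) * deriv \<theta> t)) (at t)"
    by (auto intro!: derivative_eq_intros r_deriv \<theta>_deriv)
  then have "(y has_real_derivative pr * sin (\<theta> t) + r t * (cos (\<theta> t) * deriv \<theta> t)) (at t)"
    by (rule has_field_derivative_transform_within_open[OF _ assms(1,2)]) (metis polar r_def)
  then have vy: "vy = pr * sin (\<theta> t) + r t * (cos (\<theta> t) * deriv \<theta> t)"
    using y_deriv DERIV_unique by blast
  have xt: "x t = r t * cos (\<theta> t)" and yt: "y t = r t * sin (\<theta> t)"
    using polar assms(2) r_def by metis+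
  have "x t * vy - y t * vx = r t ^ 2 * deriv \<theta> t * (cos (\<theta> t) ^ 2 + sin (\<theta> t) ^ 2)"
    unfolding vx vy xt yt by algebra
  then show ?thesis by (simp add: r_def)
qed

text \<open>A continuous branch of the polar angle on the half-plane p cos theta0 + q sin theta0 > 0,
  equal to theta0 on the ray in direction theta0.\<close>
definition local_polar_angle :: "real \<Rightarrow> real \<Rightarrow> real \<Rightarrow> real" where
  "local_polar_angle \<theta>\<^sub>0 p q =
     \<theta>\<^sub>0 + arctan ((q * cos \<theta>\<^sub>0 - p * sin \<theta>\<^sub>0) / (p * cos \<theta>\<^sub>0 + q * sin \<theta>\<^sub>0))"

lemma local_polar_angle_polar:
  fixes p q \<theta>\<^sub>0 :: real
  assumes "p * cos \<theta>\<^sub>0 + q * sin \<theta>\<^sub>0 > 0"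
  shows "sqrt (p ^ 2 + q ^ 2) * cos (local_polar_angle \<theta>\<^sub>0 p q) = p"
    and "sqrt (p ^ 2 + q ^ 2) * sin (local_polar_angle \<theta>\<^sub>0 p q) = q"
proof -
  define a b where "a = p * cos \<theta>\<^sub>0 + q * sin \<theta>\<^sub>0" and "b = q * cos \<theta>\<^sub>0 - p * sin \<theta>\<^sub>0"
  define z where "z = b / a"
  have a_pos: "a > 0" using assms by (simp add: a_def)
  have w_pos: "sqrt (1 + z ^ 2) > 0" by (simp add: add_pos_nonneg)
  have "p ^ 2 + q ^ 2 - (a ^ 2 + b ^ 2) = - (p ^ 2 + q ^ 2) * (cos \<theta>\<^sub>0 ^ 2 + sin \<theta>\<^sub>0 ^ 2 - 1)"
    unfolding a_def b_def by algebra
  then have "p ^ 2 + q ^ 2 = a ^ 2 * (1 + z ^ 2)"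
    using a_pos by (simp add: z_def field_simps power2_eq_square)
  then have r: "sqrt (p ^ 2 + q ^ 2) = a * sqrt (1 + z ^ 2)"
    using a_pos by (simp add: real_sqrt_mult)
  have b: "b = a * z" using a_pos by (simp add: z_def)
  have "p - (a * cos \<theta>\<^sub>0 - b * sin \<theta>\<^sub>0) = - p * (cos \<theta>\<^sub>0 ^ 2 + sin \<theta>\<^sub>0 ^ 2 - 1)"
    and "q - (a * sin \<theta>\<^sub>0 + b * cos \<theta>\<^sub>0) = - q * (cos \<theta>\<^sub>0 ^ 2 + sin \<theta>\<^sub>0 ^ 2 - 1)"
    unfolding a_def b_def by algebra+
  then have p: "p = a * cos \<theta>\<^sub>0 - b * sin \<theta>\<^sub>0" and q: "q = a * sin \<theta>\<^sub>0 + b * cos \<theta>\<^sub>0"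
    by simp_all
  have angle: "local_polar_angle \<theta>\<^sub>0 p q = \<theta>\<^sub>0 + arctan z"
    by (simp add: local_polar_angle_def z_def a_def b_def)
  have "sqrt (p ^ 2 + q ^ 2) * cos (\<theta>\<^sub>0 + arctan z)
      = a * sqrt (1 + z ^ 2) * (cos \<theta>\<^sub>0 * (1 / sqrt (1 + z ^ 2)) - sin \<theta>\<^sub>0 * (z / sqrt (1 + z ^ 2)))"
    by (simp only: cos_add cos_arctan sin_arctan r)
  also have "\<dots> = p" using w_pos by (simp add: p b field_simps)
  finally show "sqrt (p ^ 2 + q ^ 2) * cos (local_polar_angle \<theta>\<^sub>0 p q) = p" by (simp only: angle)
  have "sqrt (p ^ 2 + q ^ 2) * sin (\<theta>\<^sub>0 + arctan z)
      = a * sqrt (1 + z ^ 2) * (sin \<theta>\<^sub>0 * (1 / sqrt (1 + z ^ 2)) + cos \<theta>\<^sub>0 * (z / sqrt (1 + z ^ 2)))"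
    by (simp only: sin_add cos_arctan sin_arctan r)
  also have "\<dots> = q" using w_pos by (simp add: q b field_simps)
  finally show "sqrt (p ^ 2 + q ^ 2) * sin (local_polar_angle \<theta>\<^sub>0 p q) = q" by (simp only: angle)
qed

lemma local_polar_angle_on_ray [simp]: "local_polar_angle \<theta>\<^sub>0 (r * cos \<theta>\<^sub>0) (r * sin \<theta>\<^sub>0) = \<theta>\<^sub>0"
  by (simp add: local_polar_angle_def algebra_simps)

lemma local_polar_angle_has_derivative:
  fixes p q :: "real \<Rightarrow> real"
  assumes p_deriv: "(p has_real_derivative p') (at u)" and q_deriv: "(q has_real_derivative q') (at u)"
    and "r > 0" and p_ray: "p u = r * cos \<theta>\<^sub>0" and q_ray: "q u = r * sin \<theta>\<^sub>0"
  shows "((\<lambda>u. local_polar_angle \<theta>\<^sub>0 (p u) (q u)) has_real_derivative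
           (q' * cos \<theta>\<^sub>0 - p' * sin \<theta>\<^sub>0) / r) (at u)"
proof -
  have cs: "cos \<theta>\<^sub>0 ^ 2 + sin \<theta>\<^sub>0 ^ 2 = 1" by simp
  have a: "p u * cos \<theta>\<^sub>0 + q u * sin \<theta>\<^sub>0 = r" and b: "q u * cos \<theta>\<^sub>0 - p u * sin \<theta>\<^sub>0 = 0"
    unfolding p_ray q_ray using cs by (auto simp: algebra_simps power2_eq_square simp flip: distrib_left)
  show ?thesis
    unfolding local_polar_angle_def
    using \<open>r > 0\<close> by (auto intro!: derivative_eq_intros p_deriv q_deriv simp: a b)
qed

lemma polar_potential_eventually_eq:
  fixes V :: "real \<Rightarrow> real \<Rightarrow> real" and p q :: "real \<Rightarrow> real"
  assumes "open I" and "open \<Omega>"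
    and V_polar: "\<forall>\<rho> \<phi>. \<rho> > 0 \<and> \<phi> \<in> I \<and> (\<rho> * cos \<phi>, \<rho> * sin \<phi>) \<in> \<Omega> \<longrightarrow>
                   V (\<rho> * cos \<phi>) (\<rho> * sin \<phi>) = k / \<rho> + g \<phi> / \<rho>^2"
    and p_cont: "isCont p u" and q_cont: "isCont q u"
    and "r > 0" and "\<theta>\<^sub>0 \<in> I" and p_ray: "p u = r * cos \<theta>\<^sub>0" and q_ray: "q u = r * sin \<theta>\<^sub>0"
    and "(p u, q u) \<in> \<Omega>"
  shows "\<forall>\<^sub>F s in at u. V (p s) (q s) =
           k / sqrt (p s ^ 2 + q s ^ 2) + g (local_polar_angle \<theta>\<^sub>0 (p s) (q s)) / (p s ^ 2 + q s ^ 2)"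
proof -
  define a where "a s = p s * cos \<theta>\<^sub>0 + q s * sin \<theta>\<^sub>0" for s
  have a_u: "a u = r" unfolding a_def p_ray q_ray
    by (simp add: algebra_simps power2_eq_square flip: distrib_left)
  have "isCont a u" unfolding a_def using p_cont q_cont by (intro continuous_intros)
  then have ev_a: "\<forall>\<^sub>F s in at u. a s > 0"
    using order_tendstoD(1) \<open>r > 0\<close> a_u by (auto simp: isCont_def)
  have "isCont (\<lambda>s. local_polar_angle \<theta>\<^sub>0 (p s) (q s)) u"
    unfolding local_polar_angle_def using p_cont q_cont a_u \<open>r > 0\<close>
    by (intro continuous_intros) (auto simp: a_def)
  then have ev_angle: "\<forall>\<^sub>F s in at u. local_polar_angle \<theta>\<^sub>0 (p s) (q s) \<in> I"
    using topological_tendstoD \<open>open I\<close> \<open>\<theta>\<^sub>0 \<in> I\<close> by (fastforce simp: isCont_def p_ray q_ray)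
  have "isCont (\<lambda>s. (p s, q s)) u" using p_cont q_cont by (intro continuous_intros)
  then have ev_\<Omega>: "\<forall>\<^sub>F s in at u. (p s, q s) \<in> \<Omega>"
    using topological_tendstoD \<open>open \<Omega>\<close> \<open>(p u, q u) \<in> \<Omega>\<close> by (fastforce simp: isCont_def)
  show ?thesis
    using ev_a ev_angle ev_\<Omega>
  proof eventually_elim
    case (elim s)
    let ?\<rho> = "sqrt (p s ^ 2 + q s ^ 2)" and ?\<phi> = "local_polar_angle \<theta>\<^sub>0 (p s) (q s)"
    have p: "?\<rho> * cos ?\<phi> = p s" and q: "?\<rho> * sin ?\<phi> = q s"
      using local_polar_angle_polar elim(1) by (simp_all add: a_def)
    have "?\<rho> > 0"
      using elim(1) by (auto simp: a_def sum_power2_gt_zero_iff)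
    then have "V (?\<rho> * cos ?\<phi>) (?\<rho> * sin ?\<phi>) = k / ?\<rho> + g ?\<phi> / ?\<rho>^2"
      using V_polar[rule_format, of ?\<rho> ?\<phi>] elim(2,3) by (simp add: p q)
    then show ?case by (simp add: p q)
  qed
qed

lemma polar_potential_has_derivative_along:
  fixes V :: "real \<Rightarrow> real \<Rightarrow> real" and p q g :: "real \<Rightarrow> real"
  assumes "open I" and "open \<Omega>"
    and V_polar: "\<forall>\<rho> \<phi>. \<rho> > 0 \<and> \<phi> \<in> I \<and> (\<rho> * cos \<phi>, \<rho> * sin \<phi>) \<in> \<Omega> \<longrightarrow>
                   V (\<rho> * cos \<phi>) (\<rho> * sin \<phi>) = k / \<rho> + g \<phi> / \<rho>^2"
    and p_deriv: "(p has_real_derivative p') (at u)" and q_deriv: "(q has_real_derivative q') (at u)"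
    and g_deriv: "(g has_real_derivative g') (at \<theta>\<^sub>0)"
    and "r > 0" and "\<theta>\<^sub>0 \<in> I" and p_ray: "p u = r * cos \<theta>\<^sub>0" and q_ray: "q u = r * sin \<theta>\<^sub>0"
    and "(p u, q u) \<in> \<Omega>"
  shows "((\<lambda>s. V (p s) (q s)) has_real_derivative
           (p' * cos \<theta>\<^sub>0 + q' * sin \<theta>\<^sub>0) * (- k / r ^ 2 - 2 * g \<theta>\<^sub>0 / r ^ 3)
         + (q' * cos \<theta>\<^sub>0 - p' * sin \<theta>\<^sub>0) * (g' / r ^ 3)) (at u)"
proof -
  define h where "h s = k / sqrt (p s ^ 2 + q s ^ 2) + g (local_polar_angle \<theta>\<^sub>0 (p s) (q s)) / (p s ^ 2 + q s ^ 2)" for s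
  have r2: "p u ^ 2 + q u ^ 2 = r ^ 2"
    unfolding p_ray q_ray by (simp add: algebra_simps power2_eq_square flip: distrib_left)
  have angle_u: "local_polar_angle \<theta>\<^sub>0 (p u) (q u) = \<theta>\<^sub>0" by (simp add: p_ray q_ray)
  have g_angle: "((\<lambda>s. g (local_polar_angle \<theta>\<^sub>0 (p s) (q s))) has_real_derivative
      g' * ((q' * cos \<theta>\<^sub>0 - p' * sin \<theta>\<^sub>0) / r)) (at u)"
    using DERIV_chain2[OF _ local_polar_angle_has_derivative[OF p_deriv q_deriv \<open>r > 0\<close> p_ray q_ray]]
      g_deriv by (simp only: angle_u)
  define \<alpha> \<beta> where "\<alpha> = p' * cos \<theta>\<^sub>0 + q' * sin \<theta>\<^sub>0" and "\<beta> = q' * cos \<theta>\<^sub>0 - p' * sin \<theta>\<^sub>0"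
  have sq_deriv: "((\<lambda>s. p s ^ 2 + q s ^ 2) has_real_derivative 2 * r * \<alpha>) (at u)"
    by (auto intro!: derivative_eq_intros p_deriv q_deriv simp: p_ray q_ray \<alpha>_def algebra_simps)
  have "((\<lambda>s. sqrt (p s ^ 2 + q s ^ 2)) has_real_derivative inverse (sqrt (r ^ 2)) / 2 * (2 * r * \<alpha>)) (at u)"
    using DERIV_chain2[OF DERIV_real_sqrt sq_deriv] \<open>r > 0\<close> by (simp add: r2)
  then have radius_deriv: "((\<lambda>s. sqrt (p s ^ 2 + q s ^ 2)) has_real_derivative \<alpha>) (at u)"
    using \<open>r > 0\<close> by (simp add: field_simps)
  have "(h has_real_derivative
      (0 * r - k * \<alpha>) / (r * r) + (g' * (\<beta> / r) * r ^ 2 - g \<theta>\<^sub>0 * (2 * r * \<alpha>)) / (r ^ 2 * r ^ 2)) (at u)"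
    unfolding h_def[abs_def]
    using DERIV_add[OF DERIV_divide[OF DERIV_const radius_deriv] DERIV_divide[OF g_angle[folded \<beta>_def] sq_deriv]]
      \<open>r > 0\<close> by (simp add: r2 angle_u)
  moreover have "(0 * r - k * \<alpha>) / (r * r) + (g' * (\<beta> / r) * r ^ 2 - g \<theta>\<^sub>0 * (2 * r * \<alpha>)) / (r ^ 2 * r ^ 2)
      = \<alpha> * (- k / r ^ 2 - 2 * g \<theta>\<^sub>0 / r ^ 3) + \<beta> * (g' / r ^ 3)"
    using \<open>r > 0\<close> by (simp add: field_simps power2_eq_square power3_eq_cube)
  ultimately have "(h has_real_derivative \<alpha> * (- k / r ^ 2 - 2 * g \<theta>\<^sub>0 / r ^ 3) + \<beta> * (g' / r ^ 3)) (at u)"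
    by simp
  moreover have "\<forall>\<^sub>F s in at u. V (p s) (q s) = h s"
    using polar_potential_eventually_eq[OF assms(1-3) DERIV_isCont[OF p_deriv] DERIV_isCont[OF q_deriv]
        \<open>r > 0\<close> \<open>\<theta>\<^sub>0 \<in> I\<close> p_ray q_ray \<open>(p u, q u) \<in> \<Omega>\<close>]
    by (simp add: h_def)
  moreover have "V (p u) (q u) = h u"
  proof -
    have "V (p u) (q u) = k / r + g \<theta>\<^sub>0 / r ^ 2"
      using V_polar \<open>r > 0\<close> \<open>\<theta>\<^sub>0 \<in> I\<close> \<open>(p u, q u) \<in> \<Omega>\<close> by (simp add: p_ray q_ray)
    then show ?thesis using \<open>r > 0\<close> by (simp add: h_def r2 angle_u)
  qed
  ultimately show ?thesis
    using has_field_derivative_cong_eventually[of "\<lambda>s. V (p s) (q s)" h] unfolding \<alpha>_def \<beta>_def by blast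
qed

lemma polar_momenta_has_derivative:
  fixes V :: "real \<Rightarrow> real \<Rightarrow> real" and x y vx vy g :: "real \<Rightarrow> real" and t :: real
  defines "r \<equiv> sqrt (x t ^ 2 + y t ^ 2)"
  assumes "open I" and "open \<Omega>"
    and V_polar: "\<forall>\<rho> \<phi>. \<rho> > 0 \<and> \<phi> \<in> I \<and> (\<rho> * cos \<phi>, \<rho> * sin \<phi>) \<in> \<Omega> \<longrightarrow>
                   V (\<rho> * cos \<phi>) (\<rho> * sin \<phi>) = k / \<rho> + g \<phi> / \<rho>^2"
    and x_deriv: "(x has_real_derivative vx t) (at t)"
    and y_deriv: "(y has_real_derivative vy t) (at t)"
    and x_newton: "(vx has_real_derivative - deriv (\<lambda>u. V u (y t)) (x t)) (at t)"
    and y_newton: "(vy has_real_derivative - deriv (\<lambda>u. V (x t) u) (y t)) (at t)"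
    and r_pos: "r > 0" and "\<phi> \<in> I" and x_ray: "x t = r * cos \<phi>" and y_ray: "y t = r * sin \<phi>"
    and "(x t, y t) \<in> \<Omega>"
    and g_deriv: "(g has_real_derivative g') (at \<phi>)"
  shows "((\<lambda>s. (x s * vx s + y s * vy s) / sqrt (x s ^ 2 + y s ^ 2)) has_real_derivative
           (x t * vy t - y t * vx t) ^ 2 / r ^ 3 + k / r ^ 2 + 2 * g \<phi> / r ^ 3) (at t)"
    and "((\<lambda>s. x s * vy s - y s * vx s) has_real_derivative - g' / r ^ 2) (at t)"
proof -
  define Vr V\<theta> where "Vr = - k / r ^ 2 - 2 * g \<phi> / r ^ 3" and "V\<theta> = g' / r ^ 3"
  have "deriv (\<lambda>u. V u (y t)) (x t) = cos \<phi> * Vr - sin \<phi> * V\<theta>"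
    using polar_potential_has_derivative_along[where p = "\<lambda>u. u" and q = "\<lambda>u. y t",
        OF assms(2-4) DERIV_ident DERIV_const g_deriv r_pos \<open>\<phi> \<in> I\<close> x_ray y_ray]
      \<open>(x t, y t) \<in> \<Omega>\<close> by (simp add: DERIV_imp_deriv Vr_def V\<theta>_def)
  then have ax: "(vx has_real_derivative - (cos \<phi> * Vr - sin \<phi> * V\<theta>)) (at t)"
    using x_newton by simp
  have "deriv (\<lambda>u. V (x t) u) (y t) = sin \<phi> * Vr + cos \<phi> * V\<theta>"
    using polar_potential_has_derivative_along[where p = "\<lambda>u. x t" and q = "\<lambda>u. u",
        OF assms(2-4) DERIV_const DERIV_ident g_deriv r_pos \<open>\<phi> \<in> I\<close> x_ray y_ray]
      \<open>(x t, y t) \<in> \<Omega>\<close> by (simp add: DERIV_imp_deriv Vr_def V\<theta>_def)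
  then have ay: "(vy has_real_derivative - (sin \<phi> * Vr + cos \<phi> * V\<theta>)) (at t)"
    using y_newton by simp
  have cs: "cos \<phi> ^ 2 + sin \<phi> ^ 2 = 1" by simp
  have "x t * - (cos \<phi> * Vr - sin \<phi> * V\<theta>) + y t * - (sin \<phi> * Vr + cos \<phi> * V\<theta>)
      = - r * Vr * (cos \<phi> ^ 2 + sin \<phi> ^ 2)"
    and "x t * - (sin \<phi> * Vr + cos \<phi> * V\<theta>) - y t * - (cos \<phi> * Vr - sin \<phi> * V\<theta>)
      = - r * V\<theta> * (cos \<phi> ^ 2 + sin \<phi> ^ 2)"
    unfolding x_ray y_ray by algebra+
  then have radial: "x t * - (cos \<phi> * Vr - sin \<phi> * V\<theta>) + y t * - (sin \<phi> * Vr + cos \<phi> * V\<theta>) = - r * Vr"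
    and tangential: "x t * - (sin \<phi> * Vr + cos \<phi> * V\<theta>) - y t * - (cos \<phi> * Vr - sin \<phi> * V\<theta>) = - r * V\<theta>"
    unfolding cs by simp_all
  show "((\<lambda>s. (x s * vx s + y s * vy s) / sqrt (x s ^ 2 + y s ^ 2)) has_real_derivative
           (x t * vy t - y t * vx t) ^ 2 / r ^ 3 + k / r ^ 2 + 2 * g \<phi> / r ^ 3) (at t)"
    using radial_momentum_has_derivative[OF x_deriv y_deriv ax ay r_pos[unfolded r_def], folded r_def]
      r_pos unfolding radial by (simp add: Vr_def add_ac)
  show "((\<lambda>s. x s * vy s - y s * vx s) has_real_derivative - g' / r ^ 2) (at t)"
    using angular_momentum_has_derivative[OF x_deriv y_deriv ax ay] r_pos
    unfolding tangential by (simp add: V\<theta>_def power3_eq_cube power2_eq_square)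
qed

lemma polarJ_has_derivative_zero:
  fixes r \<theta> pr p\<theta> f :: "real \<Rightarrow> real"
  assumes r_pos: "r t > 0"
    and r_deriv: "(r has_real_derivative pr t) (at t)"
    and \<theta>_deriv: "(\<theta> has_real_derivative p\<theta> t / r t ^ 2) (at t)"
    and pr_deriv: "(pr has_real_derivative
                    p\<theta> t ^ 2 / r t ^ 3 + k / r t ^ 2 + 2 * deriv f (\<theta> t) / r t ^ 3) (at t)"
    and p\<theta>_deriv: "(p\<theta> has_real_derivative - deriv (deriv f) (\<theta> t) / r t ^ 2) (at t)"
    and f_diff: "f differentiable (at (\<theta> t))"
    and f'_diff: "deriv f differentiable (at (\<theta> t))"
    and ode1: "sin (\<theta> t) * ((3 * deriv f (\<theta> t) + c1) * deriv (deriv f) (\<theta> t)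
                 - 2 * f (\<theta> t) * deriv f (\<theta> t))
               + cos (\<theta> t) * (f (\<theta> t) * deriv (deriv f) (\<theta> t) + 4 * (deriv f (\<theta> t))^2
                 + 2 * c1 * deriv f (\<theta> t)) = 0"
    and ode2: "(c2 - deriv f (\<theta> t)) * deriv (deriv f) (\<theta> t) + k * (c1 + 2 * deriv f (\<theta> t)) * cos (\<theta> t)
               + k * (deriv (deriv f) (\<theta> t) - f (\<theta> t)) * sin (\<theta> t) = 0"
  shows "((\<lambda>s. polarJ f k c1 c2 (r s) (\<theta> s) (pr s) (p\<theta> s)) has_real_derivative 0) (at t)"
proof -
  let ?s = "sin (\<theta> t)" and ?c = "cos (\<theta> t)" and ?g = "f (\<theta> t)"
    and ?g1 = "deriv f (\<theta> t)" and ?g2 = "deriv (deriv f) (\<theta> t)"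
  have r_ne: "r t \<noteq> 0" using r_pos by simp
  have f_comp: "((\<lambda>s. f (\<theta> s)) has_real_derivative ?g1 * (p\<theta> t / r t ^ 2)) (at t)"
    using DERIV_chain2[OF _ \<theta>_deriv] f_diff by (simp add: DERIV_deriv_iff_real_differentiable)
  have f'_comp: "((\<lambda>s. deriv f (\<theta> s)) has_real_derivative ?g2 * (p\<theta> t / r t ^ 2)) (at t)"
    using DERIV_chain2[OF _ \<theta>_deriv] f'_diff by (simp add: DERIV_deriv_iff_real_differentiable)
  have "((\<lambda>s. polarJ f k c1 c2 (r s) (\<theta> s) (pr s) (p\<theta> s)) has_real_derivative
      ((c2 - ?g1) * ?g2 + k * (c1 + 2 * ?g1) * ?c + k * (?g2 - ?g) * ?s) / r t ^ 2
    + (?s * ((3 * ?g1 + c1) * ?g2 - 2 * ?g * ?g1) + ?c * (?g * ?g2 + 4 * ?g1^2 + 2 * c1 * ?g1)) / r t ^ 3)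
    (at t)"
    unfolding polarJ_def
    by (rule derivative_eq_intros r_deriv \<theta>_deriv pr_deriv p\<theta>_deriv f_comp f'_comp refl | simp add: r_ne)+
      (simp add: field_simps r_ne power2_eq_square power3_eq_cube)
  then show ?thesis using ode1 ode2 by simp
qed

theorem mainTheorem15:
  fixes k c1 c2 :: real
    and f :: "real \<Rightarrow> real" and I :: "real set"
    and V :: "real \<Rightarrow> real \<Rightarrow> real" and \<Omega> :: "(real \<times> real) set"
    and T :: "real set"
    and x y \<theta> vx vy :: "real \<Rightarrow> real"
  assumes k_nz: "k \<noteq> 0"
    and I_interval: "is_interval I" and I_open: "open I"
    and f_smooth: "\<forall>n. \<forall>\<phi>\<in>I. ((deriv ^^ n) f) differentiable (at \<phi>)"
    and ode1: "\<forall>\<phi>\<in>I. sin \<phi> * ((3 * deriv f \<phi> + c1) * deriv (deriv f) \<phi> - 2 * f \<phi> * deriv f \<phi>)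
                   + cos \<phi> * (f \<phi> * deriv (deriv f) \<phi> + 4 * (deriv f \<phi>)^2 + 2 * c1 * deriv f \<phi>) = 0"
    and ode2: "\<forall>\<phi>\<in>I. (c2 - deriv f \<phi>) * deriv (deriv f) \<phi> + k * (c1 + 2 * deriv f \<phi>) * cos \<phi>
                   + k * (deriv (deriv f) \<phi> - f \<phi>) * sin \<phi> = 0"
    and \<Omega>_open: "open \<Omega>"
    and V_polar: "\<forall>\<rho> \<phi>. \<rho> > 0 \<and> \<phi> \<in> I \<and> (\<rho> * cos \<phi>, \<rho> * sin \<phi>) \<in> \<Omega> \<longrightarrow>
                   V (\<rho> * cos \<phi>) (\<rho> * sin \<phi>) = k / \<rho> + deriv f \<phi> / \<rho>^2"
    and T_open: "open T"
    and traj_in: "\<forall>t\<in>T. (x t, y t) \<in> \<Omega>"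
    and x_vel: "\<forall>t\<in>T. (x has_real_derivative vx t) (at t)"
    and y_vel: "\<forall>t\<in>T. (y has_real_derivative vy t) (at t)"
    and x_eom: "\<forall>t\<in>T. (vx has_real_derivative (- deriv (\<lambda>u. V u (y t)) (x t))) (at t)"
    and y_eom: "\<forall>t\<in>T. (vy has_real_derivative (- deriv (\<lambda>u. V (x t) u) (y t))) (at t)"
    and r_pos: "\<forall>t\<in>T. sqrt ((x t)^2 + (y t)^2) > 0"
    and \<theta>_in: "\<forall>t\<in>T. \<theta> t \<in> I"
    and \<theta>_polar: "\<forall>t\<in>T. x t = sqrt ((x t)^2 + (y t)^2) * cos (\<theta> t)
                     \<and> y t = sqrt ((x t)^2 + (y t)^2) * sin (\<theta> t)"
    and \<theta>_diff: "\<forall>t\<in>T. \<theta> differentiable (at t)"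
  shows "\<forall>t\<in>T. ((\<lambda>s. polarJ f k c1 c2
                    (sqrt ((x s)^2 + (y s)^2)) (\<theta> s)
                    (deriv (\<lambda>u. sqrt ((x u)^2 + (y u)^2)) s)
                    ((sqrt ((x s)^2 + (y s)^2))^2 * deriv \<theta> s))
                 has_real_derivative 0) (at t)"
proof -
  define r pr p\<theta> where "r s = sqrt (x s ^ 2 + y s ^ 2)"
    and "pr s = (x s * vx s + y s * vy s) / r s" and "p\<theta> s = x s * vy s - y s * vx s" for s
  have r_deriv: "(r has_real_derivative pr s) (at s)" and p\<theta>_eq: "r s ^ 2 * deriv \<theta> s = p\<theta> s"
    if "s \<in> T" for s
  proof -
    have "x s ^ 2 + y s ^ 2 > 0" using r_pos that by simp
    then show "(r has_real_derivative pr s) (at s)" and "r s ^ 2 * deriv \<theta> s = p\<theta> s"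
      using radius_has_derivative angular_momentum_polar[OF T_open that \<theta>_polar] x_vel y_vel \<theta>_diff that
      by (simp_all add: r_def[abs_def] pr_def p\<theta>_def)
  qed
  have "((\<lambda>s. polarJ f k c1 c2 (r s) (\<theta> s) (deriv r s) (r s ^ 2 * deriv \<theta> s)) has_real_derivative 0)
    (at t)" if "t \<in> T" for t
  proof -
    let ?\<phi> = "\<theta> t"
    have r_t: "r t > 0" and "?\<phi> \<in> I" and x_ray: "x t = r t * cos ?\<phi>" and y_ray: "y t = r t * sin ?\<phi>"
      using r_pos \<theta>_in \<theta>_polar that by (simp_all add: r_def)
    have "(deriv ^^ 0) f differentiable (at ?\<phi>)" and "(deriv ^^ 1) f differentiable (at ?\<phi>)"
      using f_smooth \<open>?\<phi> \<in> I\<close> by blast+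
    then have f_diff: "f differentiable (at ?\<phi>)" and f'_diff: "deriv f differentiable (at ?\<phi>)"
      by simp_all
    have pr_deriv: "(pr has_real_derivative
        p\<theta> t ^ 2 / r t ^ 3 + k / r t ^ 2 + 2 * deriv f ?\<phi> / r t ^ 3) (at t)"
      and p\<theta>_deriv: "(p\<theta> has_real_derivative - deriv (deriv f) ?\<phi> / r t ^ 2) (at t)"
      using polar_momenta_has_derivative[OF I_open \<Omega>_open V_polar x_vel[rule_format, OF that]
          y_vel[rule_format, OF that] x_eom[rule_format, OF that] y_eom[rule_format, OF that]
          r_t[unfolded r_def] \<open>?\<phi> \<in> I\<close> x_ray[unfolded r_def] y_ray[unfolded r_def]
          traj_in[rule_format, OF that] f'_diff[unfolded DERIV_deriv_iff_real_differentiable[symmetric]]]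
      by (simp_all add: pr_def[abs_def] p\<theta>_def[abs_def] r_def)
    have "(\<theta> has_real_derivative p\<theta> t / r t ^ 2) (at t)"
      using \<theta>_diff that p\<theta>_eq[OF that, symmetric] r_t
      by (simp add: DERIV_deriv_iff_real_differentiable[symmetric])
    then have "((\<lambda>s. polarJ f k c1 c2 (r s) (\<theta> s) (pr s) (p\<theta> s)) has_real_derivative 0) (at t)"
      by (intro polarJ_has_derivative_zero[where r = r and \<theta> = \<theta> and pr = pr and p\<theta> = p\<theta>]
          r_t r_deriv that pr_deriv p\<theta>_deriv f_diff f'_diff
          ode1[rule_format, OF \<open>?\<phi> \<in> I\<close>] ode2[rule_format, OF \<open>?\<phi> \<in> I\<close>])
    then show ?thesis
      by (rule has_field_derivative_transform_within_open[OF _ T_open that])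
        (use DERIV_imp_deriv[OF r_deriv] p\<theta>_eq in simp)
  qed
  then show ?thesis by (simp add: r_def[abs_def])
qed

end
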